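(* Let $\Pi$ be a consistent generalized annotated program, either an LGAP or a UGAP, over a finite annotation semi-lattice $\mathcal{T}$. Then $\mathit{lfp}(\mathbf{T}_\Pi)=\mathbf{T}_\Pi\uparrow x$, where $x=\mathit{height}(\mathcal{T})\cdot|\mathcal{L}|$ and $\mathcal{L}$ is the set of all ground literals.
   Context: Setting: a first-order language with finitely many constants, finitely many predicate symbols of arity 1 or 2, and no function symbols; $\mathcal{L}$ is the (finite) set of ground literals (ground atoms $a$ and their negations $\neg a$). Annotations come from a finite semi-lattice $(\mathcal{T},\sqsubseteq)$ with finitely many discrete elements: for a UGAP, $\mathcal{T}$ is an upper semi-lattice (greatest element $\top$) and interpretations map ground atoms to $\mathcal{T}$; for an LGAP, $\mathcal{T}$ is a lower semi-lattice with least element $\bot$ and possibly several maximal elements, equipped with a unary function $\neg$ (in the paper's instantiation: closed intervals $[l,u]\subseteq[0,1]$, $\bot=[0,1]$, maximal elements $[x,x]$, $\neg[l,u]=[1-u,1-l]$), and interpretations map ground literals to $\mathcal{T}$ with $I(a)=\neg(I(\neg a))$. $\mathit{height}(\mathcal{T})$ is the maximum number of elements on a path in $\mathcal{T}$ between the bottom element and a top (maximal) element, both endpoints included. A rule is $\ell_0:\mu_0\leftarrow\ell_1:\mu_1\wedge\cdots\wedge\ell_m:\mu_m$ with annotated literals (annotations being lattice elements, lattice variables, or function terms over $\mathcal{T}$); a program is a finite set of rules. $I\models\ell:\mu$ iff $\mu\sqsubseteq I(\ell)$; a ground rule is satisfied iff its head is satisfied or some body element is not; $\Pi$ is consistent iff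 some interpretation satisfies all ground instances of its rules. $\mathbf{T}_\Pi(I)(\ell_0)=\sup\big(\{I(\ell_0)\}\cup\{\mu_0 : \ell_0:\mu_0\leftarrow\ell_1:\mu_1\wedge\cdots\wedge\ell_m:\mu_m\text{ a ground instance of a rule in }\Pi,\ I\models\ell_i:\mu_i\ \forall i\}\big)$. Iteration: $\mathbf{T}_\Pi\uparrow 0$ assigns the bottom element $\bot$ to every ground literal, and $\mathbf{T}_\Pi\uparrow(i+1)=\mathbf{T}_\Pi(\mathbf{T}_\Pi\uparrow i)$. $\mathit{lfp}(\mathbf{T}_\Pi)$ is the least fixpoint of $\mathbf{T}_\Pi$. *)

theory Defs
  imports Main
begin

datatype 'a lit = Pos 'a | Neg 'a

text \<open>A ground annotated rule  l0:mu0 <- l1:mu1 /\ ... /\ lm:mum.\<close>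
datatype ('a, 't) grule = Rule "'a lit" 't "('a lit \<times> 't) list"

definition is_lub :: "'t::order set \<Rightarrow> 't \<Rightarrow> bool" where
  "is_lub S u \<longleftrightarrow> (\<forall>x\<in>S. x \<le> u) \<and> (\<forall>v. (\<forall>x\<in>S. x \<le> v) \<longrightarrow> u \<le> v)"

definition is_glb :: "'t::order set \<Rightarrow> 't \<Rightarrow> bool" where
  "is_glb S g \<longleftrightarrow> (\<forall>x\<in>S. g \<le> x) \<and> (\<forall>v. (\<forall>x\<in>S. v \<le> x) \<longrightarrow> v \<le> g)"

definition sat_ann :: "('a lit \<Rightarrow> 't::order) \<Rightarrow> 'a lit \<times> 't \<Rightarrow> bool" where
  "sat_ann I lm \<longleftrightarrow> snd lm \<le> I (fst lm)"

fun rule_sat :: "('a lit \<Rightarrow> 't::order) \<Rightarrow> ('a, 't) grule \<Rightarrow> bool" where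
  "rule_sat I (Rule l m body) \<longleftrightarrow> sat_ann I (l, m) \<or> \<not> (\<forall>b\<in>set body. sat_ann I b)"

fun rule_lits :: "('a, 't) grule \<Rightarrow> 'a lit set" where
  "rule_lits (Rule l m body) = insert l (fst ` set body)"

text \<open>The set whose supremum defines T_Pi(I)(l); R is the set of ground instances of Pi.\<close>
definition T_set :: "('a, 't::order) grule set \<Rightarrow> ('a lit \<Rightarrow> 't) \<Rightarrow> 'a lit \<Rightarrow> 't set" where
  "T_set R I l = insert (I l) {m. \<exists>body. Rule l m body \<in> R \<and> (\<forall>b\<in>set body. sat_ann I b)}"

definition T_op :: "('a, 't::order) grule set \<Rightarrow> ('a lit \<Rightarrow> 't) \<Rightarrow> 'a lit \<Rightarrow> 't" where
  "T_op R I l = (THE u. is_lub (T_set R I l) u)"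

definition T_defined :: "('a, 't::order) grule set \<Rightarrow> ('a lit \<Rightarrow> 't) \<Rightarrow> bool" where
  "T_defined R I \<longleftrightarrow> (\<forall>l. \<exists>u. is_lub (T_set R I l) u)"

definition T_up :: "('a, 't::order_bot) grule set \<Rightarrow> nat \<Rightarrow> 'a lit \<Rightarrow> 't" where
  "T_up R n = (T_op R ^^ n) (\<lambda>_. bot)"

definition is_fixpoint :: "('a, 't::order) grule set \<Rightarrow> ('a lit \<Rightarrow> 't) \<Rightarrow> bool" where
  "is_fixpoint R I \<longleftrightarrow> T_defined R I \<and> T_op R I = I"

definition T_lfp :: "('a, 't::order) grule set \<Rightarrow> 'a lit \<Rightarrow> 't" where
  "T_lfp R = (THE J. is_fixpoint R J \<and> (\<forall>K. is_fixpoint R K \<longrightarrow> (\<forall>l. J l \<le> K l)))"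

definition height :: "'t::order_bot itself \<Rightarrow> nat" where
  "height _ = Max {length xs | xs :: 't list. xs \<noteq> [] \<and> sorted_wrt (<) xs \<and> hd xs = bot
                     \<and> (\<forall>y. \<not> last xs < y)}"

definition ugap :: "('a, 't::order) grule set \<Rightarrow> bool" where
  "ugap R \<longleftrightarrow> (\<forall>x y::'t. \<exists>u. is_lub {x, y} u) \<and> (\<exists>t::'t. \<forall>x. x \<le> t)
             \<and> (\<forall>r\<in>R. \<forall>l\<in>rule_lits r. \<exists>a. l = Pos a)"

definition ugap_consistent :: "('a, 't::order) grule set \<Rightarrow> bool" where
  "ugap_consistent R \<longleftrightarrow> (\<exists>I. \<forall>r\<in>R. rule_sat I r)"

definition lgap :: "('a, 't::order) grule set \<Rightarrow> bool" where
  "lgap R \<longleftrightarrow> (\<forall>x y::'t. \<exists>g. is_glb {x, y} g)"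

definition lgap_interp :: "('t \<Rightarrow> 't) \<Rightarrow> ('a lit \<Rightarrow> 't) \<Rightarrow> bool" where
  "lgap_interp neg I \<longleftrightarrow> (\<forall>a. I (Pos a) = neg (I (Neg a)))"

definition lgap_consistent :: "('t \<Rightarrow> 't) \<Rightarrow> ('a, 't::order) grule set \<Rightarrow> bool" where
  "lgap_consistent neg R \<longleftrightarrow> (\<exists>I. lgap_interp neg I \<and> (\<forall>r\<in>R. rule_sat I r))"

end

theory Submission
  imports Defs
begin

text \<open>
  Starting from \<open>\<bottom>\<close>, the iterates of \<open>T\<^sub>\<Pi>\<close> increase pointwise. Rank an annotation by the
  length of a longest strict chain from \<open>\<bottom>\<close> to it; ranks lie between 1 and \<open>height(T)\<close>.
  Each non-stationary step raises the rank of some literal, so the sum of the ranks over all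
  literals, which starts at \<open>|L|\<close> and never exceeds \<open>height(T) * |L|\<close>, leaves room for fewer
  than \<open>height(T) * |L|\<close> such steps. Consistency provides a model of \<open>\<Pi>\<close> bounding every
  iterate; since bounded sets have least upper bounds in a finite semi-lattice of either kind,
  all iterates are defined, and the stationary one is the least fixpoint.
\<close>

section \<open>Ranks in a finite order\<close>

lemma sorted_wrt_less_le_last:
  "sorted_wrt (<) (xs :: 't::order list) \<Longrightarrow> x \<in> set xs \<Longrightarrow> x \<le> last xs"
  by (induction xs) (auto intro: less_imp_le dest: last_in_set)

lemma length_sorted_wrt_less_le_card:
  assumes "sorted_wrt (<) (xs :: 't::{order,finite} list)"
  shows "length xs \<le> card (UNIV :: 't set)"
proof -
  have "distinct xs" using assms by (induction xs) auto
  then show ?thesis by (metis card_mono distinct_card finite subset_UNIV)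
qed

lemma finite_lengths_sorted_wrt_less:
  "finite (length ` {xs :: 't::{order,finite} list. sorted_wrt (<) xs \<and> P xs})"
  by (rule finite_subset[of _ "{..card (UNIV :: 't set)}"])
    (auto simp: length_sorted_wrt_less_le_card)

definition bot_chains :: "'t::order_bot \<Rightarrow> 't list set" where
  "bot_chains t = {xs. xs \<noteq> [] \<and> sorted_wrt (<) xs \<and> hd xs = bot \<and> last xs = t}"

definition chain_rank :: "'t::{order_bot,finite} \<Rightarrow> nat" where
  "chain_rank t = Max (length ` bot_chains t)"

lemma bot_chains_nonempty: "bot_chains t \<noteq> {}"
proof (cases "t = bot")
  case True
  then have "[bot] \<in> bot_chains t" by (simp add: bot_chains_def)
  then show ?thesis by blast
next
  case False
  then have "[bot, t] \<in> bot_chains t" by (simp add: bot_chains_def bot_less)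
  then show ?thesis by blast
qed

lemma finite_lengths_bot_chains: "finite (length ` bot_chains (t :: 't::{order_bot,finite}))"
  using finite_lengths_sorted_wrt_less[of "\<lambda>xs. xs \<noteq> [] \<and> hd xs = bot \<and> last xs = t"]
  by (simp add: bot_chains_def conj_commute conj_left_commute)

lemma chain_rank_attained: obtains xs where "xs \<in> bot_chains t" "length xs = chain_rank t"
proof -
  have "Max (length ` bot_chains t) \<in> length ` bot_chains t"
    using finite_lengths_bot_chains bot_chains_nonempty by (intro Max_in) auto
  then show ?thesis using that unfolding chain_rank_def by auto
qed

lemma length_le_chain_rank: "xs \<in> bot_chains t \<Longrightarrow> length xs \<le> chain_rank t"
  unfolding chain_rank_def using finite_lengths_bot_chains by (rule Max_ge) simp

lemma chain_rank_pos: "1 \<le> chain_rank t"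
proof -
  obtain xs where "xs \<in> bot_chains t" "length xs = chain_rank t"
    by (rule chain_rank_attained)
  then show ?thesis by (cases xs) (auto simp: bot_chains_def)
qed

lemma append_bot_chains:
  "xs \<in> bot_chains s \<Longrightarrow> s < t \<Longrightarrow> xs @ [t] \<in> bot_chains t"
  using sorted_wrt_less_le_last[of xs]
  by (auto simp: bot_chains_def sorted_wrt_append intro: le_less_trans)

lemma chain_rank_strict_mono: "s < t \<Longrightarrow> chain_rank s < chain_rank t"
  by (metis Suc_le_lessD append_bot_chains chain_rank_attained length_append_singleton
      length_le_chain_rank)

lemma chain_rank_mono: "s \<le> t \<Longrightarrow> chain_rank s \<le> chain_rank t"
  using chain_rank_strict_mono[of s t] by (cases "s = t") (auto simp: order_less_le)

lemma chain_rank_le_height: "chain_rank (t :: 't::{order_bot,finite}) \<le> height TYPE('t)"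
proof -
  define H where "H = {length xs | xs :: 't list. xs \<noteq> [] \<and> sorted_wrt (<) xs \<and> hd xs = bot
                     \<and> (\<forall>y. \<not> last xs < y)}"
  have "finite H"
    using finite_lengths_sorted_wrt_less[of "\<lambda>xs. xs \<noteq> [] \<and> hd xs = bot \<and> (\<forall>y. \<not> last xs < y)"]
    unfolding H_def by (simp add: image_def conj_commute conj_left_commute)
  obtain m where "t \<le> m" and m_maximal: "\<forall>y. \<not> m < y"
    using finite_has_maximal2[of "UNIV :: 't set" t] by (auto simp: less_le)
  obtain xs where xs: "xs \<in> bot_chains t" "length xs = chain_rank t"
    by (rule chain_rank_attained)
  obtain ys where ys: "ys \<in> bot_chains m" "chain_rank t \<le> length ys"
  proof (cases "t = m")
    case True
    with xs that show ?thesis by simp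
  next
    case False
    with \<open>t \<le> m\<close> have "xs @ [m] \<in> bot_chains m"
      using xs(1) by (simp add: append_bot_chains)
    with xs(2) that show ?thesis by simp
  qed
  from ys(1) m_maximal have "length ys \<in> H"
    unfolding H_def bot_chains_def by blast
  with ys(2) \<open>finite H\<close> have "chain_rank t \<le> Max H"
    using Max_ge le_trans by blast
  then show ?thesis unfolding height_def H_def .
qed

lemma pointwise_mono_seq_stationary:
  fixes f :: "nat \<Rightarrow> 'b \<Rightarrow> 't::{order_bot,finite}"
  assumes fin: "finite (UNIV :: 'b set)" and incr: "\<And>n x. f n x \<le> f (Suc n) x"
  shows "\<exists>k < height TYPE('t) * card (UNIV :: 'b set). f (Suc k) = f k"
proof (rule ccontr)
  let ?N = "height TYPE('t) * card (UNIV :: 'b set)"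
  define potential where "potential n = (\<Sum>x\<in>UNIV. chain_rank (f n x))" for n
  assume "\<not> ?thesis"
  then have moving: "\<forall>k<?N. f (Suc k) \<noteq> f k" by blast
  have grows: "card (UNIV :: 'b set) + n \<le> potential n" if "n \<le> ?N" for n
    using that
  proof (induction n)
    case 0
    have "(\<Sum>_\<in>(UNIV :: 'b set). 1) \<le> potential 0"
      unfolding potential_def by (intro sum_mono) (use chain_rank_pos in auto)
    then show ?case by simp
  next
    case (Suc n)
    then have "f (Suc n) \<noteq> f n" using moving by simp
    then obtain a where "f (Suc n) a \<noteq> f n a" by (meson ext)
    then have "chain_rank (f n a) < chain_rank (f (Suc n) a)"
      using incr[of n a] by (intro chain_rank_strict_mono) (simp add: order_less_le)
    then have "potential n < potential (Suc n)"
      unfolding potential_def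
      by (intro sum_strict_mono_ex1[OF fin]) (auto intro: chain_rank_mono incr)
    with Suc show ?case by simp
  qed
  have "potential ?N \<le> card (UNIV :: 'b set) * height TYPE('t)"
    unfolding potential_def
    using sum_bounded_above[of UNIV "\<lambda>x. chain_rank (f ?N x)" "height TYPE('t)"]
    by (simp add: chain_rank_le_height)
  moreover have "0 < card (UNIV :: 'b set)"
    using fin by (simp add: card_gt_0_iff)
  ultimately show False using grows[of ?N] by (simp add: mult.commute)
qed

section \<open>Existence of least upper bounds\<close>

definition has_bounded_lubs :: "'t::order itself \<Rightarrow> bool" where
  "has_bounded_lubs _ \<longleftrightarrow> (\<forall>S :: 't set. (\<exists>b. \<forall>x\<in>S. x \<le> b) \<longrightarrow> (\<exists>u. is_lub S u))"

lemma is_lub_unique: "is_lub S (u :: 't::order) \<Longrightarrow> is_lub S v \<Longrightarrow> u = v"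
  unfolding is_lub_def by (simp add: order_antisym)

lemma finite_has_lub:
  assumes "\<forall>x y :: 't::order_bot. \<exists>u. is_lub {x, y} u" and "finite (S :: 't set)"
  shows "\<exists>u. is_lub S u"
  using assms(2)
proof (induction S rule: finite_induct)
  case empty
  have "is_lub {} (bot :: 't)" unfolding is_lub_def by simp
  then show ?case by blast
next
  case (insert x F)
  then obtain u where u: "is_lub F u" by blast
  obtain v where v: "is_lub {x, u} v" using assms(1) by blast
  have "is_lub (insert x F) v" unfolding is_lub_def
  proof (intro conjI allI impI ballI)
    fix y assume "y \<in> insert x F"
    then show "y \<le> v" using u v unfolding is_lub_def by (auto intro: order_trans)
  next
    fix w assume "\<forall>y\<in>insert x F. y \<le> w"
    then show "v \<le> w" using u v unfolding is_lub_def by auto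
  qed
  then show ?case by blast
qed

lemma finite_nonempty_has_glb:
  assumes "\<forall>x y :: 't::order. \<exists>g. is_glb {x, y} g" and "finite (S :: 't set)" "S \<noteq> {}"
  shows "\<exists>g. is_glb S g"
  using assms(2,3)
proof (induction S rule: finite_ne_induct)
  case (singleton x)
  have "is_glb {x} x" unfolding is_glb_def by simp
  then show ?case by blast
next
  case (insert x F)
  then obtain u where u: "is_glb F u" by blast
  obtain v where v: "is_glb {x, u} v" using assms(1) by blast
  have "is_glb (insert x F) v" unfolding is_glb_def
  proof (intro conjI allI impI ballI)
    fix y assume "y \<in> insert x F"
    then show "v \<le> y" using u v unfolding is_glb_def by (auto intro: order_trans)
  next
    fix w assume "\<forall>y\<in>insert x F. w \<le> y"
    then show "w \<le> v" using u v unfolding is_glb_def by auto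
  qed
  then show ?case by blast
qed

lemma has_bounded_lubs_if_binary_lubs:
  assumes "\<forall>x y :: 't::{order_bot,finite}. \<exists>u. is_lub {x, y} u"
  shows "has_bounded_lubs TYPE('t)"
  unfolding has_bounded_lubs_def using finite_has_lub[OF assms] by simp

lemma has_bounded_lubs_if_binary_glbs:
  assumes "\<forall>x y :: 't::{order,finite}. \<exists>g. is_glb {x, y} g"
  shows "has_bounded_lubs TYPE('t)"
  unfolding has_bounded_lubs_def
proof (intro allI impI)
  fix S :: "'t set"
  assume "\<exists>b. \<forall>x\<in>S. x \<le> b"
  then obtain g where g: "is_glb {v. \<forall>x\<in>S. x \<le> v} g"
    using finite_nonempty_has_glb[OF assms, of "{v. \<forall>x\<in>S. x \<le> v}"] by auto
  have "is_lub S g" unfolding is_lub_def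
  proof
    show "\<forall>x\<in>S. x \<le> g" using g unfolding is_glb_def by blast
    show "\<forall>v. (\<forall>x\<in>S. x \<le> v) \<longrightarrow> g \<le> v" using g unfolding is_glb_def by blast
  qed
  then show "\<exists>u. is_lub S u" by blast
qed

section \<open>The immediate consequence operator\<close>

lemma T_op_is_lub: "T_defined R I \<Longrightarrow> is_lub (T_set R I l) (T_op R I l)"
  unfolding T_defined_def T_op_def by (metis is_lub_unique theI)

lemma T_op_upper: "T_defined R I \<Longrightarrow> x \<in> T_set R I l \<Longrightarrow> x \<le> T_op R I l"
  using T_op_is_lub unfolding is_lub_def by blast

lemma T_op_least: "T_defined R I \<Longrightarrow> \<forall>x\<in>T_set R I l. x \<le> v \<Longrightarrow> T_op R I l \<le> v"
  using T_op_is_lub unfolding is_lub_def by blast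

lemma T_op_inflationary: "T_defined R I \<Longrightarrow> I l \<le> T_op R I l"
  by (simp add: T_op_upper T_set_def)

lemma sat_ann_mono: "sat_ann I b \<Longrightarrow> \<forall>l. I l \<le> J l \<Longrightarrow> sat_ann J b"
  unfolding sat_ann_def by (meson order_trans)

lemma T_set_mono_le:
  assumes "\<forall>l. I l \<le> J l" and "x \<in> T_set R I l"
  obtains y where "y \<in> T_set R J l" "x \<le> y"
  using assms(2) unfolding T_set_def
proof (elim insertE CollectE exE conjE)
  assume "x = I l"
  then show thesis using assms(1) that[of "J l"] by (simp add: T_set_def)
next
  fix body assume "Rule l x body \<in> R" and "\<forall>b\<in>set body. sat_ann I b"
  then have "\<forall>b\<in>set body. sat_ann J b" using assms(1) sat_ann_mono by blast
  with \<open>Rule l x body \<in> R\<close> show thesis using that[of x] by (auto simp: T_set_def)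
qed

lemma T_op_mono:
  assumes "\<forall>l. I l \<le> J l" "T_defined R I" "T_defined R J"
  shows "T_op R I l \<le> T_op R J l"
proof (rule T_op_least[OF assms(2)], intro ballI)
  fix x assume "x \<in> T_set R I l"
  then obtain y where "y \<in> T_set R J l" "x \<le> y"
    by (rule T_set_mono_le[OF assms(1)])
  then show "x \<le> T_op R J l"
    using T_op_upper[OF assms(3)] order_trans by blast
qed

lemma T_set_below_model:
  assumes model: "\<forall>r\<in>R. rule_sat C r" and "\<forall>l. I l \<le> C l" and "x \<in> T_set R I l"
  shows "x \<le> C l"
proof -
  have "sat_ann C (l, x)" if "Rule l x body \<in> R" "\<forall>b\<in>set body. sat_ann I b" for body
    using model that sat_ann_mono[OF _ \<open>\<forall>l. I l \<le> C l\<close>] by fastforce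
  with assms(2,3) show ?thesis unfolding T_set_def sat_ann_def by auto
qed

lemma T_op_below_model:
  assumes "has_bounded_lubs TYPE('t)" and "\<forall>r\<in>R. rule_sat C r" and "\<forall>l. I l \<le> (C l :: 't::order)"
  shows "T_defined R I \<and> (\<forall>l. T_op R I l \<le> C l)"
proof -
  have bounded: "\<forall>x\<in>T_set R I l. x \<le> C l" for l
    using assms(2,3) T_set_below_model by blast
  then have "T_defined R I"
    using assms(1) unfolding has_bounded_lubs_def T_defined_def by blast
  with bounded show ?thesis using T_op_least by blast
qed

lemma finite_UNIV_lit: "finite (UNIV :: 'a::finite lit set)"
proof -
  have "UNIV \<subseteq> range Pos \<union> range (Neg :: 'a \<Rightarrow> 'a lit)"
  proof
    fix x :: "'a lit"
    show "x \<in> range Pos \<union> range Neg" by (cases x) auto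
  qed
  then show ?thesis by (rule finite_subset) simp
qed

lemma T_up_Suc: "T_up R (Suc n) = T_op R (T_up R n)"
  by (simp add: T_up_def)

lemma T_up_below_model:
  assumes "has_bounded_lubs TYPE('t)" and "\<forall>r\<in>R. rule_sat C r"
  shows "T_defined R (T_up R n) \<and> (\<forall>l. T_up R n l \<le> (C l :: 't::order_bot))"
proof (induction n)
  case 0
  then show ?case using T_op_below_model[OF assms] by (simp add: T_up_def)
next
  case (Suc n)
  then show ?case using T_op_below_model[OF assms] by (simp add: T_up_Suc)
qed

lemma T_up_below_fixpoint:
  assumes "\<And>n. T_defined R (T_up R n)" and "is_fixpoint R K"
  shows "T_up R n l \<le> K l"
proof (induction n arbitrary: l)
  case 0
  then show ?case by (simp add: T_up_def)
next
  case (Suc n)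
  then have "T_op R (T_up R n) l \<le> T_op R K l"
    using assms T_op_mono unfolding is_fixpoint_def by blast
  then show ?case using assms(2) unfolding is_fixpoint_def by (simp add: T_up_Suc)
qed

lemma T_up_stationary:
  assumes "T_up R (Suc k) = T_up R k" and "k \<le> n"
  shows "T_up R n = T_up R k"
  using assms(2) by (induction n rule: dec_induct) (use assms(1) in \<open>simp_all add: T_up_Suc\<close>)

lemma T_lfp_eqI:
  assumes "is_fixpoint R I" and "\<And>K l. is_fixpoint R K \<Longrightarrow> I l \<le> K l"
  shows "T_lfp R = I"
  unfolding T_lfp_def
proof (rule the_equality)
  show "is_fixpoint R I \<and> (\<forall>K. is_fixpoint R K \<longrightarrow> (\<forall>l. I l \<le> K l))"
    using assms by blast
next
  fix J assume "is_fixpoint R J \<and> (\<forall>K. is_fixpoint R K \<longrightarrow> (\<forall>l. J l \<le> K l))"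
  with assms show "J = I" by (meson ext order_antisym)
qed

theorem T_lfp_eq_T_up_height_card:
  fixes R :: "('a::finite, 't::{order_bot, finite}) grule set"
  assumes "has_bounded_lubs TYPE('t)" and model: "\<forall>r\<in>R. rule_sat C r"
  shows "T_lfp R = T_up R (height TYPE('t) * card (UNIV :: 'a lit set))"
proof -
  let ?N = "height TYPE('t) * card (UNIV :: 'a lit set)"
  have defined: "T_defined R (T_up R n)" for n
    using T_up_below_model[OF assms] by blast
  have "T_up R n l \<le> T_up R (Suc n) l" for n l
    using T_op_inflationary[OF defined] by (simp add: T_up_Suc)
  then obtain k where "k < ?N" and stationary: "T_up R (Suc k) = T_up R k"
    using pointwise_mono_seq_stationary[OF finite_UNIV_lit, of "T_up R"] by blast
  then have "T_up R ?N = T_up R k"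
    by (intro T_up_stationary[OF stationary]) simp
  then have "is_fixpoint R (T_up R ?N)"
    using defined stationary by (simp add: is_fixpoint_def T_up_Suc)
  then show ?thesis
    using T_up_below_fixpoint[OF defined] by (rule T_lfp_eqI)
qed

theorem theorem4p3:
  fixes R :: "('a::finite, 't::{order_bot, finite}) grule set"
    and neg :: "'t \<Rightarrow> 't"
  assumes "finite R"
    and "(ugap R \<and> ugap_consistent R) \<or> (lgap R \<and> lgap_consistent neg R)"
  shows "T_lfp R = T_up R (height TYPE('t) * card (UNIV :: 'a lit set))"
  using assms(2)
proof
  assume ugap: "ugap R \<and> ugap_consistent R"
  then obtain t :: 't where top: "\<forall>x. x \<le> t" unfolding ugap_def by blast
  have "rule_sat (\<lambda>_. t) r" for r :: "('a, 't) grule"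
    by (cases r) (simp add: sat_ann_def top)
  then have "\<forall>r\<in>R. rule_sat (\<lambda>_. t) r" by blast
  moreover have "has_bounded_lubs TYPE('t)"
    using ugap has_bounded_lubs_if_binary_lubs unfolding ugap_def by blast
  ultimately show ?thesis by (rule T_lfp_eq_T_up_height_card[rotated])
next
  assume lgap: "lgap R \<and> lgap_consistent neg R"
  then obtain I where "\<forall>r\<in>R. rule_sat I r" unfolding lgap_consistent_def by blast
  moreover have "has_bounded_lubs TYPE('t)"
    using lgap has_bounded_lubs_if_binary_glbs unfolding lgap_def by blast
  ultimately show ?thesis by (rule T_lfp_eq_T_up_height_card[rotated])
qed

end
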